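(* Let $\mathcal{S}=(\mathscr{X},\nabla_{\mathcal{S}})$ be a non-commutative spacetime, $\mathscr{Y}$ a quantale, and $f:\mathscr{X}\to\mathscr{Y}$ a join-preserving strict monoidal map which is an order embedding ($f(a)\le f(b)$ implies $a\le b$) and has a left adjoint $f_!:\mathscr{Y}\to\mathscr{X}$. Then there exists $\nabla:\mathscr{Y}\to\mathscr{Y}$ such that $\mathcal{T}=(\mathscr{Y},\nabla)$ is a non-commutative spacetime and $f:\mathcal{S}\to\mathcal{T}$ is a logical geometric map.
   Context: A monoidal poset is a poset with a monoid structure whose multiplication is monotone in each argument. A quantale is a monoidal poset with all joins whose multiplication distributes over arbitrary joins in each argument. A monotone map between monoidal posets is oplax monoidal if $f(e)\le e$ and $f(a\otimes b)\le f(a)\otimes f(b)$, strict monoidal if equalities hold. A non-commutative spacetime is a pair $(\mathscr{X},\nabla)$ with $\mathscr{X}$ a quantale and $\nabla$ a join-preserving oplax monoidal endomap. Its implication is $a\to_{\mathcal{S}}b=\Box(a\Rightarrow b)$, where $\Box$ is the right adjoint of $\nabla$ and $\Rightarrow$ the right adjoint of $a\otimes(-)$; equivalently $a\otimes\nabla b\le c$ iff $b\le a\to_{\mathcal{S}}c$. A geometric map $f:(\mathscr{X},\nabla_{\mathcal{S}})\to(\mathscr{Y},\nabla_{\mathcal{T}})$ is a join-preserving strict monoidal map with $f\nabla_{\mathcal{S}}=\nabla_{\mathcal{T}}f$; it is logical if moreover $f(a\to_{\mathcal{S}}b)=f(a)\to_{\mathcal{T}}f(b)$. *)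

theory Defs
  imports Main
begin

definition join_preserving :: "('a::complete_lattice \<Rightarrow> 'b::complete_lattice) \<Rightarrow> bool" where
  "join_preserving f \<longleftrightarrow> (\<forall>A. f (Sup A) = Sup (f ` A))"

definition quantale :: "('a::complete_lattice \<Rightarrow> 'a \<Rightarrow> 'a) \<Rightarrow> 'a \<Rightarrow> bool" where
  "quantale m e \<longleftrightarrow>
     (\<forall>a b c. m (m a b) c = m a (m b c)) \<and>
     (\<forall>a. m e a = a) \<and> (\<forall>a. m a e = a) \<and>
     (\<forall>a B. m a (Sup B) = Sup ((\<lambda>b. m a b) ` B)) \<and>
     (\<forall>A b. m (Sup A) b = Sup ((\<lambda>a. m a b) ` A))"

definition oplax_monoidal ::
  "('a::order \<Rightarrow> 'a \<Rightarrow> 'a) \<Rightarrow> 'a \<Rightarrow> ('b::order \<Rightarrow> 'b \<Rightarrow> 'b) \<Rightarrow> 'b \<Rightarrow> ('a \<Rightarrow> 'b) \<Rightarrow> bool" where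
  "oplax_monoidal m e m' e' f \<longleftrightarrow> mono f \<and> f e \<le> e' \<and> (\<forall>a b. f (m a b) \<le> m' (f a) (f b))"

definition strict_monoidal ::
  "('a::order \<Rightarrow> 'a \<Rightarrow> 'a) \<Rightarrow> 'a \<Rightarrow> ('b::order \<Rightarrow> 'b \<Rightarrow> 'b) \<Rightarrow> 'b \<Rightarrow> ('a \<Rightarrow> 'b) \<Rightarrow> bool" where
  "strict_monoidal m e m' e' f \<longleftrightarrow> mono f \<and> f e = e' \<and> (\<forall>a b. f (m a b) = m' (f a) (f b))"

definition nc_spacetime :: "('a::complete_lattice \<Rightarrow> 'a \<Rightarrow> 'a) \<Rightarrow> 'a \<Rightarrow> ('a \<Rightarrow> 'a) \<Rightarrow> bool" where
  "nc_spacetime m e nabla \<longleftrightarrow> quantale m e \<and> join_preserving nabla \<and> oplax_monoidal m e m e nabla"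

text \<open>Box: right adjoint of nabla (given by the standard formula for join-preserving maps).\<close>
definition box :: "('a::complete_lattice \<Rightarrow> 'a) \<Rightarrow> 'a \<Rightarrow> 'a" where
  "box nabla b = Sup {x. nabla x \<le> b}"

text \<open>Residual: right adjoint of a \<otimes> (-).\<close>
definition residual :: "('a::complete_lattice \<Rightarrow> 'a \<Rightarrow> 'a) \<Rightarrow> 'a \<Rightarrow> 'a \<Rightarrow> 'a" where
  "residual m a b = Sup {x. m a x \<le> b}"

definition st_imp :: "('a::complete_lattice \<Rightarrow> 'a \<Rightarrow> 'a) \<Rightarrow> ('a \<Rightarrow> 'a) \<Rightarrow> 'a \<Rightarrow> 'a \<Rightarrow> 'a" where
  "st_imp m nabla a b = box nabla (residual m a b)"

definition geometric_map ::
  "('a::complete_lattice \<Rightarrow> 'a \<Rightarrow> 'a) \<Rightarrow> 'a \<Rightarrow> ('a \<Rightarrow> 'a) \<Rightarrow>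
   ('b::complete_lattice \<Rightarrow> 'b \<Rightarrow> 'b) \<Rightarrow> 'b \<Rightarrow> ('b \<Rightarrow> 'b) \<Rightarrow> ('a \<Rightarrow> 'b) \<Rightarrow> bool" where
  "geometric_map m e nS m' e' nT f \<longleftrightarrow>
     join_preserving f \<and> strict_monoidal m e m' e' f \<and> (\<forall>a. f (nS a) = nT (f a))"

definition logical_map ::
  "('a::complete_lattice \<Rightarrow> 'a \<Rightarrow> 'a) \<Rightarrow> 'a \<Rightarrow> ('a \<Rightarrow> 'a) \<Rightarrow>
   ('b::complete_lattice \<Rightarrow> 'b \<Rightarrow> 'b) \<Rightarrow> 'b \<Rightarrow> ('b \<Rightarrow> 'b) \<Rightarrow> ('a \<Rightarrow> 'b) \<Rightarrow> bool" where
  "logical_map m e nS m' e' nT f \<longleftrightarrow>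
     geometric_map m e nS m' e' nT f \<and>
     (\<forall>a b. f (st_imp m nS a b) = st_imp m' nT (f a) (f b))"

end

theory Submission
  imports Defs
begin

text \<open>Put \<open>\<nabla> = f \<circ> \<nabla>\<^sub>S \<circ> f\<^sub>!\<close>. The left adjoint \<open>f\<^sub>!\<close> of a strict monoidal map
is join-preserving and oplax monoidal, so \<open>\<nabla>\<close> is a composite of join-preserving oplax
monoidal maps. Since \<open>f\<close> is an embedding, \<open>f\<^sub>! \<circ> f = id\<close>, whence \<open>f \<nabla>\<^sub>S = \<nabla> f\<close>.
Logicality follows by chasing adjunctions:
\<open>y \<le> f a \<rightarrow> f b \<longleftrightarrow> f (a \<otimes> \<nabla>\<^sub>S (f\<^sub>! y)) \<le> f b \<longleftrightarrow> f\<^sub>! y \<le> a \<rightarrow>\<^sub>S b \<longleftrightarrow> y \<le> f (a \<rightarrow>\<^sub>S b)\<close>.\<close>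

lemma join_preserving_mono:
  assumes "join_preserving g"
  shows "mono g"
proof
  fix x y :: 'a
  assume "x \<le> y"
  then have "g y = sup (g x) (g y)"
    using assms[unfolded join_preserving_def, rule_format, of "{x, y}"] by (simp add: sup_absorb2)
  then show "g x \<le> g y"
    by (metis sup.cobounded1)
qed

lemma join_preserving_comp:
  "join_preserving g \<Longrightarrow> join_preserving h \<Longrightarrow> join_preserving (h \<circ> g)"
  unfolding join_preserving_def by (simp add: image_comp)

lemma box_adjoint:
  assumes "join_preserving g"
  shows "g x \<le> b \<longleftrightarrow> x \<le> box g b"
proof
  assume "g x \<le> b"
  then show "x \<le> box g b"
    unfolding box_def by (simp add: Sup_upper)
next
  assume "x \<le> box g b"
  then have "g x \<le> g (Sup {x. g x \<le> b})"
    using join_preserving_mono[OF assms] unfolding box_def by (rule monoD[rotated])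
  also have "\<dots> = Sup (g ` {x. g x \<le> b})"
    using assms unfolding join_preserving_def by blast
  also have "\<dots> \<le> b"
    by (auto intro: Sup_least)
  finally show "g x \<le> b" .
qed

lemma quantale_mult_left_join_preserving: "quantale m e \<Longrightarrow> join_preserving (m a)"
  unfolding quantale_def join_preserving_def by auto

lemma quantale_mult_right_join_preserving: "quantale m e \<Longrightarrow> join_preserving (\<lambda>a. m a b)"
  unfolding quantale_def join_preserving_def by auto

lemma quantale_mult_mono:
  assumes "quantale m e" and "a \<le> b" and "c \<le> d"
  shows "m a c \<le> m b d"
proof -
  have "m a c \<le> m a d"
    using join_preserving_mono[OF quantale_mult_left_join_preserving[OF assms(1)]] assms(3)
    by (rule monoD)
  also have "\<dots> \<le> m b d"
    using join_preserving_mono[OF quantale_mult_right_join_preserving[OF assms(1)]] assms(2)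
    by (rule monoD)
  finally show ?thesis .
qed

lemma residual_adjoint:
  assumes "quantale m e"
  shows "m a x \<le> b \<longleftrightarrow> x \<le> residual m a b"
proof -
  have "residual m a b = box (m a) b"
    by (simp add: box_def residual_def)
  then show ?thesis
    using box_adjoint[OF quantale_mult_left_join_preserving[OF assms]] by simp
qed

lemma st_imp_adjoint:
  assumes "quantale m e" and "join_preserving nabla"
  shows "y \<le> st_imp m nabla a b \<longleftrightarrow> m a (nabla y) \<le> b"
  unfolding st_imp_def using box_adjoint[OF assms(2)] residual_adjoint[OF assms(1)] by metis

lemma strict_monoidal_imp_oplax_monoidal:
  "strict_monoidal m e m' e' f \<Longrightarrow> oplax_monoidal m e m' e' f"
  unfolding strict_monoidal_def oplax_monoidal_def by simp

lemma oplax_monoidal_comp: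
  assumes g: "oplax_monoidal m1 e1 m2 e2 g" and h: "oplax_monoidal m2 e2 m3 e3 h"
  shows "oplax_monoidal m1 e1 m3 e3 (h \<circ> g)"
proof -
  have "mono g" "g e1 \<le> e2" "\<And>a b. g (m1 a b) \<le> m2 (g a) (g b)"
    using g unfolding oplax_monoidal_def by auto
  moreover have "mono h" "h e2 \<le> e3" "\<And>a b. h (m2 a b) \<le> m3 (h a) (h b)"
    using h unfolding oplax_monoidal_def by auto
  ultimately have "h (g e1) \<le> e3" and "h (g (m1 a b)) \<le> m3 (h (g a)) (h (g b))" for a b
    by (meson monoD order_trans)+
  with \<open>mono g\<close> \<open>mono h\<close> show ?thesis
    unfolding oplax_monoidal_def by (simp add: monotone_on_o)
qed

lemma left_adjoint_join_preserving:
  assumes adj: "\<And>y x. l y \<le> x \<longleftrightarrow> y \<le> r x"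
  shows "join_preserving l"
  unfolding join_preserving_def
proof
  fix A
  show "l (Sup A) = Sup (l ` A)"
  proof (rule order.antisym)
    have "a \<le> r (Sup (l ` A))" if "a \<in> A" for a
      using that by (simp flip: adj add: SUP_upper)
    then show "l (Sup A) \<le> Sup (l ` A)"
      by (simp add: adj Sup_least)
    have "a \<le> r (l (Sup A))" if "a \<in> A" for a
      using that Sup_upper[of a A] adj[of "Sup A" "l (Sup A)"] by simp
    then show "Sup (l ` A) \<le> l (Sup A)"
      by (simp flip: adj add: SUP_least)
  qed
qed

lemma left_adjoint_oplax_monoidal:
  fixes fl :: "'b::complete_lattice \<Rightarrow> 'a::complete_lattice"
  assumes "quantale m' e'" and "strict_monoidal m e m' e' f"
    and adj: "\<And>y x. fl y \<le> x \<longleftrightarrow> y \<le> f x"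
  shows "oplax_monoidal m' e' m e fl"
proof -
  have "m' a b \<le> m' (f (fl a)) (f (fl b))" for a b
    using quantale_mult_mono[OF assms(1)] adj by blast
  then have "fl (m' a b) \<le> m (fl a) (fl b)" for a b
    using assms(2) adj unfolding strict_monoidal_def by simp
  moreover have "fl e' \<le> e"
    using assms(2) adj unfolding strict_monoidal_def by simp
  ultimately show ?thesis
    using join_preserving_mono[OF left_adjoint_join_preserving[OF adj]]
    unfolding oplax_monoidal_def by blast
qed

lemma left_adjoint_inverse_of_embedding:
  fixes l :: "'b::order \<Rightarrow> 'a::order"
  assumes adj: "\<And>y x. l y \<le> x \<longleftrightarrow> y \<le> r x" and emb: "\<And>a b. r a \<le> r b \<Longrightarrow> a \<le> b"
  shows "l (r a) = a"
proof (rule order.antisym)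
  show "l (r a) \<le> a"
    by (simp add: adj)
  have "r a \<le> r (l (r a))"
    by (simp flip: adj)
  then show "a \<le> l (r a)"
    by (rule emb)
qed

lemma transported_nabla_nc_spacetime:
  assumes "nc_spacetime m e nS" and "quantale m' e'"
    and "join_preserving f" and "strict_monoidal m e m' e' f"
    and adj: "\<And>y x. fl y \<le> x \<longleftrightarrow> y \<le> f x"
  shows "nc_spacetime m' e' (f \<circ> nS \<circ> fl)"
proof -
  have "join_preserving nS" and "oplax_monoidal m e m e nS"
    using assms(1) unfolding nc_spacetime_def by auto
  have "join_preserving (f \<circ> nS \<circ> fl)"
    using join_preserving_comp[OF left_adjoint_join_preserving[OF adj]
        join_preserving_comp[OF \<open>join_preserving nS\<close> assms(3)]] .
  moreover have "oplax_monoidal m' e' m' e' (f \<circ> nS \<circ> fl)"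
    using oplax_monoidal_comp[OF left_adjoint_oplax_monoidal[OF assms(2,4) adj]
        oplax_monoidal_comp[OF \<open>oplax_monoidal m e m e nS\<close>
          strict_monoidal_imp_oplax_monoidal[OF assms(4)]]] .
  ultimately show ?thesis
    using assms(2) by (simp add: nc_spacetime_def)
qed

lemma transported_nabla_geometric_map:
  assumes "join_preserving f" and "strict_monoidal m e m' e' f"
    and adj: "\<And>y x. fl y \<le> x \<longleftrightarrow> y \<le> f x" and emb: "\<And>a b. f a \<le> f b \<Longrightarrow> a \<le> b"
  shows "geometric_map m e nS m' e' (f \<circ> nS \<circ> fl) f"
  using assms left_adjoint_inverse_of_embedding[OF adj emb] unfolding geometric_map_def by simp

lemma transported_nabla_st_imp:
  assumes "nc_spacetime m e nS" and "quantale m' e'"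
    and "join_preserving f" and "strict_monoidal m e m' e' f"
    and adj: "\<And>y x. fl y \<le> x \<longleftrightarrow> y \<le> f x" and emb: "\<And>a b. f a \<le> f b \<Longrightarrow> a \<le> b"
  shows "f (st_imp m nS a b) = st_imp m' (f \<circ> nS \<circ> fl) (f a) (f b)"
proof -
  have "quantale m e" and "join_preserving nS"
    using assms(1) unfolding nc_spacetime_def by auto
  have "join_preserving (f \<circ> nS \<circ> fl)"
    using transported_nabla_nc_spacetime[OF assms(1-4) adj] unfolding nc_spacetime_def by blast
  have f_mult: "f (m a c) = m' (f a) (f c)" for c
    using assms(4) unfolding strict_monoidal_def by blast
  have f_order_embedding: "f c \<le> f d \<longleftrightarrow> c \<le> d" for c d
    using assms(4) emb unfolding strict_monoidal_def by (meson monoD)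
  have "y \<le> st_imp m' (f \<circ> nS \<circ> fl) (f a) (f b) \<longleftrightarrow> y \<le> f (st_imp m nS a b)" for y
  proof -
    have "y \<le> st_imp m' (f \<circ> nS \<circ> fl) (f a) (f b) \<longleftrightarrow> m' (f a) (f (nS (fl y))) \<le> f b"
      using st_imp_adjoint[OF assms(2) \<open>join_preserving (f \<circ> nS \<circ> fl)\<close>] by simp
    also have "\<dots> \<longleftrightarrow> m a (nS (fl y)) \<le> b"
      by (simp flip: f_mult add: f_order_embedding)
    also have "\<dots> \<longleftrightarrow> fl y \<le> st_imp m nS a b"
      using st_imp_adjoint[OF \<open>quantale m e\<close> \<open>join_preserving nS\<close>] by simp
    also have "\<dots> \<longleftrightarrow> y \<le> f (st_imp m nS a b)"
      using adj by simp
    finally show ?thesis .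
  qed
  then show ?thesis
    by (meson order.antisym order.refl)
qed

theorem corollary5p13:
  fixes m :: "'a::complete_lattice \<Rightarrow> 'a \<Rightarrow> 'a" and e :: 'a and nS :: "'a \<Rightarrow> 'a"
    and m' :: "'b::complete_lattice \<Rightarrow> 'b \<Rightarrow> 'b" and e' :: 'b
    and f :: "'a \<Rightarrow> 'b" and fl :: "'b \<Rightarrow> 'a"
  assumes "nc_spacetime m e nS"
    and "quantale m' e'"
    and "join_preserving f"
    and "strict_monoidal m e m' e' f"
    and "\<forall>a b. f a \<le> f b \<longrightarrow> a \<le> b"
    and "\<forall>y x. fl y \<le> x \<longleftrightarrow> y \<le> f x"
  shows "\<exists>nT. nc_spacetime m' e' nT \<and> logical_map m e nS m' e' nT f"
proof -
  have adj: "\<And>y x. fl y \<le> x \<longleftrightarrow> y \<le> f x" and emb: "\<And>a b. f a \<le> f b \<Longrightarrow> a \<le> b"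
    using assms(5,6) by blast+
  have "nc_spacetime m' e' (f \<circ> nS \<circ> fl)"
    using transported_nabla_nc_spacetime[OF assms(1-4) adj] .
  moreover have "logical_map m e nS m' e' (f \<circ> nS \<circ> fl) f"
    unfolding logical_map_def
    using transported_nabla_geometric_map[OF assms(3,4) adj emb]
      transported_nabla_st_imp[OF assms(1-4) adj emb] by blast
  ultimately show ?thesis
    by blast
qed

end
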